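(* In the Euclidean plane with coordinates $(x,y)$, $r^2=x^2+y^2$, let $V=\frac{M(y/r^2)}{r^4}$ where $M$ is an arbitrary smooth function. Then $V$ satisfies $\frac{x^2-y^2}{2}V_{,x}+xyV_{,y}+2xV=0$, and for the system $\ddot x=-V_{,x}$, $\ddot y=-V_{,y}$ restricted to zero energy $\dot x^2+\dot y^2+2V=0$, the quantity $$I=\frac{x^2-y^2}{2}\dot x+xy\dot y$$ is a first integral. Moreover, every zero-energy solution with $I=0$ (and $r\neq0$) lies on a circle $r=c_1\cos\theta$, i.e. $(x-\tfrac{c_1}{2})^2+y^2=\tfrac{c_1^2}{4}$ for some constant $c_1\ne0$, and along it $\theta(t)$ satisfies $t-t_0=c_1^3\int\frac{\cos^2\theta\,d\theta}{\sqrt{-2M(\tan\theta/c_1)}}$.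
   Context: Polar coordinates $x=r\cos\theta$, $y=r\sin\theta$. A first integral of the constrained system is a function whose time derivative vanishes along every solution satisfying the zero-energy constraint. *)

theory Defs
  imports "HOL-Analysis.Analysis"
begin

definition smooth_fun :: "(real \<Rightarrow> real) \<Rightarrow> bool" where
  "smooth_fun f \<longleftrightarrow> (\<forall>n x. ((deriv ^^ n) f) differentiable (at x))"

definition Vpot :: "(real \<Rightarrow> real) \<Rightarrow> real \<Rightarrow> real \<Rightarrow> real" where
  "Vpot M x y = M (y / (x\<^sup>2 + y\<^sup>2)) / (x\<^sup>2 + y\<^sup>2)\<^sup>2"

definition Vx :: "(real \<Rightarrow> real) \<Rightarrow> real \<Rightarrow> real \<Rightarrow> real" where
  "Vx M x y = deriv (\<lambda>s. Vpot M s y) x"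

definition Vy :: "(real \<Rightarrow> real) \<Rightarrow> real \<Rightarrow> real \<Rightarrow> real" where
  "Vy M x y = deriv (\<lambda>s. Vpot M x s) y"

definition first_int :: "real \<Rightarrow> real \<Rightarrow> real \<Rightarrow> real \<Rightarrow> real" where
  "first_int x y xd yd = (x\<^sup>2 - y\<^sup>2) / 2 * xd + x * y * yd"

definition zero_energy_solution ::
  "(real \<Rightarrow> real) \<Rightarrow> real set \<Rightarrow> (real \<Rightarrow> real) \<Rightarrow> (real \<Rightarrow> real)
     \<Rightarrow> (real \<Rightarrow> real) \<Rightarrow> (real \<Rightarrow> real) \<Rightarrow> bool" where
  "zero_energy_solution M J x y xd yd \<longleftrightarrow>
     (\<forall>t\<in>J. (x t, y t) \<noteq> (0, 0)
        \<and> (x has_real_derivative xd t) (at t)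
        \<and> (y has_real_derivative yd t) (at t)
        \<and> (xd has_real_derivative - Vx M (x t) (y t)) (at t)
        \<and> (yd has_real_derivative - Vy M (x t) (y t)) (at t)
        \<and> (xd t)\<^sup>2 + (yd t)\<^sup>2 + 2 * Vpot M (x t) (y t) = 0)"

end

theory Submission
  imports Defs
begin

text \<open>The potential satisfies the identity of the statement because \<open>M(y/r\<^sup>2)\<close> is invariant
  under the flow of the vector field \<open>((x\<^sup>2 - y\<^sup>2)/2, x y)\<close>, which fixes \<open>y/r\<^sup>2\<close> and rescales
  \<open>r\<^sup>4\<close> at rate \<open>2x\<close>. Differentiating \<open>I\<close> along a motion and using this identity gives
  \<open>dI/dt = x (x'\<^sup>2 + y'\<^sup>2 + 2V)\<close>, which vanishes at zero energy.
  If \<open>I = 0\<close>, then \<open>x/r\<^sup>2\<close>, whose derivative is \<open>-2I/r\<^sup>4\<close>, is constant, so the orbit is a circle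
  \<open>r\<^sup>2 = c x\<close> through the origin. On it \<open>y/r\<^sup>2 = tan \<theta> / c\<close>, and zero energy together with \<open>I = 0\<close>
  gives \<open>(\<theta>' cos\<^sup>2 \<theta> / sqrt (-2 M (tan \<theta> / c)))\<^sup>2 = 1 / c\<^sup>6\<close>. By continuity this quantity has constant
  sign on any time interval, and the substitution \<open>\<phi> = \<theta>(t)\<close> yields the time law.\<close>

lemma continuous_on_square_eq_imp_const:
  fixes h :: "real \<Rightarrow> real"
  assumes K: "connected K" and h: "continuous_on K h" and sq: "\<And>s. s \<in> K \<Longrightarrow> (h s)\<^sup>2 = a\<^sup>2"
  shows "\<exists>\<sigma>\<in>{1, -1}. \<forall>s\<in>K. h s = \<sigma> * a"
proof -
  have sub: "h ` K \<subseteq> {a, - a}" using sq by (auto simp: power2_eq_iff)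
  have "connected (h ` K)" using h K by (rule connected_continuous_image)
  moreover have "finite (h ` K)" using sub by (rule finite_subset) simp
  ultimately consider "K = {}" | w where "h ` K = {w}" by (auto simp: connected_finite_iff_sing)
  then show ?thesis
  proof cases
    case (2 w)
    then have "w = 1 * a \<or> w = - 1 * a" "\<forall>s\<in>K. h s = w" using sub by auto
    then show ?thesis by blast
  qed auto
qed

lemma interval_integral_constant_rate:
  fixes \<theta> \<theta>' f :: "real \<Rightarrow> real"
  assumes K: "is_interval K" and ab: "a \<in> K" "b \<in> K"
    and d\<theta>: "\<And>s. s \<in> K \<Longrightarrow> (\<theta> has_real_derivative \<theta>' s) (at s)"
    and c\<theta>': "continuous_on K \<theta>'" and cf: "continuous_on (\<theta> ` K) f"
    and rate: "\<And>s. s \<in> K \<Longrightarrow> \<theta>' s * f (\<theta> s) = \<kappa>"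
  shows "(LBINT \<phi>=\<theta> a..\<theta> b. f \<phi>) = \<kappa> * (b - a)"
proof -
  have ordered: "(LBINT \<phi>=\<theta> a..\<theta> b. f \<phi>) = \<kappa> * (b - a)"
    if "a \<le> b" "a \<in> K" "b \<in> K" for a b
  proof -
    have sub: "{a..b} \<subseteq> K" using mem_is_interval_1_I[OF K that(2,3)] by auto
    have "\<And>s. a \<le> s \<Longrightarrow> s \<le> b \<Longrightarrow> (\<theta> has_real_derivative \<theta>' s) (at s within {a..b})"
      using sub by (intro has_field_derivative_at_within[OF d\<theta>]) auto
    moreover have "continuous_on (\<theta> ` {a..b}) f"
      using sub by (intro continuous_on_subset[OF cf] image_mono)
    moreover have "continuous_on {a..b} \<theta>'"
      using sub by (rule continuous_on_subset[OF c\<theta>'])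
    ultimately have "(LBINT s=a..b. \<theta>' s *\<^sub>R f (\<theta> s)) = (LBINT \<phi>=\<theta> a..\<theta> b. f \<phi>)"
      by (rule interval_integral_substitution_finite[OF \<open>a \<le> b\<close>])
    moreover have "(LBINT s=a..b. \<theta>' s *\<^sub>R f (\<theta> s)) = (LBINT s=a..b. \<kappa>)"
    proof (rule interval_integral_cong)
      fix s assume "s \<in> einterval (min (ereal a) (ereal b)) (max (ereal a) (ereal b))"
      then have "s \<in> K" using sub \<open>a \<le> b\<close> by (auto simp: einterval_def)
      then show "\<theta>' s *\<^sub>R f (\<theta> s) = \<kappa>" using rate by simp
    qed
    ultimately show ?thesis by simp
  qed
  show ?thesis
  proof (cases "a \<le> b")
    case False
    have "(LBINT \<phi>=\<theta> a..\<theta> b. f \<phi>) = - (LBINT \<phi>=\<theta> b..\<theta> a. f \<phi>)"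
      by (rule interval_integral_endpoints_reverse)
    also have "\<dots> = \<kappa> * (b - a)" using ordered[of b a] False ab by (simp add: algebra_simps)
    finally show ?thesis .
  qed (use ordered ab in blast)
qed

lemma Vpot_has_derivative_x:
  assumes M': "\<And>z. (M has_real_derivative M' z) (at z)" and ab: "(a, b) \<noteq> (0, 0)"
  defines "R \<equiv> a\<^sup>2 + b\<^sup>2"
  shows "((\<lambda>s. Vpot M s b) has_real_derivative
           - 2 * a * b * M' (b / R) / R ^ 4 - 4 * a * M (b / R) / R ^ 3) (at a)"
proof -
  have R: "R \<noteq> 0" using ab by (simp add: R_def sum_power2_eq_zero_iff)
  have "((\<lambda>s. b / (s\<^sup>2 + b\<^sup>2)) has_real_derivative - 2 * a * b / R\<^sup>2) (at a)"
    using R unfolding R_def by (auto intro!: derivative_eq_intros simp: power2_eq_square)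
  from DERIV_chain2[OF M' this]
  have "((\<lambda>s. M (b / (s\<^sup>2 + b\<^sup>2)) / (s\<^sup>2 + b\<^sup>2)\<^sup>2) has_real_derivative
          (M' (b / R) * (- 2 * a * b / R\<^sup>2) * R\<^sup>2 - M (b / R) * (2 * R * (2 * a))) / (R\<^sup>2)\<^sup>2) (at a)"
    using R unfolding R_def by (auto intro!: derivative_eq_intros)
  moreover have "(M' (b / R) * (- 2 * a * b / R\<^sup>2) * R\<^sup>2 - M (b / R) * (2 * R * (2 * a))) / (R\<^sup>2)\<^sup>2
      = - 2 * a * b * M' (b / R) / R ^ 4 - 4 * a * M (b / R) / R ^ 3"
    using R by (simp add: field_simps eval_nat_numeral)
  ultimately show ?thesis unfolding Vpot_def by simp
qed

lemma Vpot_has_derivative_y: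
  assumes M': "\<And>z. (M has_real_derivative M' z) (at z)" and ab: "(a, b) \<noteq> (0, 0)"
  defines "R \<equiv> a\<^sup>2 + b\<^sup>2"
  shows "((\<lambda>s. Vpot M a s) has_real_derivative
           (a\<^sup>2 - b\<^sup>2) * M' (b / R) / R ^ 4 - 4 * b * M (b / R) / R ^ 3) (at b)"
proof -
  have R: "R \<noteq> 0" using ab by (simp add: R_def sum_power2_eq_zero_iff)
  have "((\<lambda>s. s / (a\<^sup>2 + s\<^sup>2)) has_real_derivative (a\<^sup>2 - b\<^sup>2) / R\<^sup>2) (at b)"
    using R unfolding R_def by (auto intro!: derivative_eq_intros simp: field_simps power2_eq_square)
  from DERIV_chain2[OF M' this]
  have "((\<lambda>s. M (s / (a\<^sup>2 + s\<^sup>2)) / (a\<^sup>2 + s\<^sup>2)\<^sup>2) has_real_derivative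
          (M' (b / R) * ((a\<^sup>2 - b\<^sup>2) / R\<^sup>2) * R\<^sup>2 - M (b / R) * (2 * R * (2 * b))) / (R\<^sup>2)\<^sup>2) (at b)"
    using R unfolding R_def by (auto intro!: derivative_eq_intros)
  moreover have "(M' (b / R) * ((a\<^sup>2 - b\<^sup>2) / R\<^sup>2) * R\<^sup>2 - M (b / R) * (2 * R * (2 * b))) / (R\<^sup>2)\<^sup>2
      = (a\<^sup>2 - b\<^sup>2) * M' (b / R) / R ^ 4 - 4 * b * M (b / R) / R ^ 3"
    using R by (simp add: field_simps eval_nat_numeral)
  ultimately show ?thesis unfolding Vpot_def by simp
qed

lemma Vpot_invariance:
  assumes M': "\<And>z. (M has_real_derivative M' z) (at z)" and ab: "(a, b) \<noteq> (0, 0)"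
  shows "\<exists>Va Vb. ((\<lambda>s. Vpot M s b) has_real_derivative Va) (at a)
            \<and> ((\<lambda>s. Vpot M a s) has_real_derivative Vb) (at b)
            \<and> (a\<^sup>2 - b\<^sup>2) / 2 * Va + a * b * Vb + 2 * a * Vpot M a b = 0"
proof (intro exI conjI)
  define R where "R = a\<^sup>2 + b\<^sup>2"
  have R: "R \<noteq> 0" using ab by (simp add: R_def sum_power2_eq_zero_iff)
  show "(a\<^sup>2 - b\<^sup>2) / 2 * (- 2 * a * b * M' (b / R) / R ^ 4 - 4 * a * M (b / R) / R ^ 3)
        + a * b * ((a\<^sup>2 - b\<^sup>2) * M' (b / R) / R ^ 4 - 4 * b * M (b / R) / R ^ 3)
        + 2 * a * Vpot M a b = 0"
    unfolding Vpot_def R_def[symmetric] using R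
    by (simp add: field_simps eval_nat_numeral) (simp add: R_def algebra_simps power2_eq_square)
qed (use Vpot_has_derivative_x[OF M' ab] Vpot_has_derivative_y[OF M' ab] in simp_all)

lemma first_int_has_derivative_zero:
  assumes M': "\<And>z. (M has_real_derivative M' z) (at z)"
    and sol: "zero_energy_solution M J x y xd yd" and t: "t \<in> J"
  shows "((\<lambda>s. first_int (x s) (y s) (xd s) (yd s)) has_real_derivative 0) (at t)"
proof -
  from sol t have nz: "(x t, y t) \<noteq> (0, 0)"
    and dx: "(x has_real_derivative xd t) (at t)"
    and dy: "(y has_real_derivative yd t) (at t)"
    and dxd: "(xd has_real_derivative - Vx M (x t) (y t)) (at t)"
    and dyd: "(yd has_real_derivative - Vy M (x t) (y t)) (at t)"
    and energy: "(xd t)\<^sup>2 + (yd t)\<^sup>2 + 2 * Vpot M (x t) (y t) = 0"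
    unfolding zero_energy_solution_def by auto
  obtain Va Vb where Va: "((\<lambda>s. Vpot M s (y t)) has_real_derivative Va) (at (x t))"
    and Vb: "((\<lambda>s. Vpot M (x t) s) has_real_derivative Vb) (at (y t))"
    and inv: "((x t)\<^sup>2 - (y t)\<^sup>2) / 2 * Va + x t * y t * Vb + 2 * x t * Vpot M (x t) (y t) = 0"
    using Vpot_invariance[OF M' nz] by blast
  have "Vx M (x t) (y t) = Va" "Vy M (x t) (y t) = Vb"
    unfolding Vx_def Vy_def using Va Vb by (simp_all add: DERIV_imp_deriv)
  with dxd dyd have dxd': "(xd has_real_derivative - Va) (at t)"
    and dyd': "(yd has_real_derivative - Vb) (at t)" by simp_all
  have "((\<lambda>s. first_int (x s) (y s) (xd s) (yd s)) has_real_derivative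
      (x t * xd t - y t * yd t) * xd t + ((x t)\<^sup>2 - (y t)\<^sup>2) / 2 * - Va
      + (xd t * y t + x t * yd t) * yd t + x t * y t * - Vb) (at t)"
    unfolding first_int_def using dx dy dxd' dyd'
    by (auto intro!: derivative_eq_intros simp: field_simps)
  also have "(x t * xd t - y t * yd t) * xd t + ((x t)\<^sup>2 - (y t)\<^sup>2) / 2 * - Va
      + (xd t * y t + x t * yd t) * yd t + x t * y t * - Vb
    = x t * ((xd t)\<^sup>2 + (yd t)\<^sup>2 + 2 * Vpot M (x t) (y t))
      - (((x t)\<^sup>2 - (y t)\<^sup>2) / 2 * Va + x t * y t * Vb + 2 * x t * Vpot M (x t) (y t))"
    by (simp add: field_simps power2_eq_square)
  finally show ?thesis by (simp only: energy inv) simp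
qed

lemma inversion_x_has_derivative:
  assumes dx: "(x has_real_derivative u) (at t)" and dy: "(y has_real_derivative v) (at t)"
    and nz: "(x t, y t) \<noteq> (0, 0)"
  shows "((\<lambda>s. x s / ((x s)\<^sup>2 + (y s)\<^sup>2)) has_real_derivative
           - 2 * first_int (x t) (y t) u v / ((x t)\<^sup>2 + (y t)\<^sup>2)\<^sup>2) (at t)"
proof -
  define R where "R = (x t)\<^sup>2 + (y t)\<^sup>2"
  have R: "R \<noteq> 0" using nz by (simp add: R_def sum_power2_eq_zero_iff)
  have "((\<lambda>s. x s / ((x s)\<^sup>2 + (y s)\<^sup>2)) has_real_derivative
      (u * R - x t * (2 * x t * u + 2 * y t * v)) / R\<^sup>2) (at t)"
    using dx dy R unfolding R_def by (auto intro!: derivative_eq_intros simp: power2_eq_square)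
  also have "(u * R - x t * (2 * x t * u + 2 * y t * v)) / R\<^sup>2 = - 2 * first_int (x t) (y t) u v / R\<^sup>2"
    unfolding first_int_def R_def by (simp add: algebra_simps power2_eq_square)
  finally show ?thesis unfolding R_def .
qed

lemma zero_first_int_circle:
  assumes J: "is_interval J"
    and dx: "\<And>t. t \<in> J \<Longrightarrow> (x has_real_derivative xd t) (at t)"
    and dy: "\<And>t. t \<in> J \<Longrightarrow> (y has_real_derivative yd t) (at t)"
    and nz: "\<And>t. t \<in> J \<Longrightarrow> (x t, y t) \<noteq> (0, 0)"
    and I0: "\<And>t. t \<in> J \<Longrightarrow> first_int (x t) (y t) (xd t) (yd t) = 0"
    and t1: "t1 \<in> J" "x t1 \<noteq> 0"
  obtains c where "c \<noteq> 0" "\<And>t. t \<in> J \<Longrightarrow> (x t)\<^sup>2 + (y t)\<^sup>2 = c * x t"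
proof -
  have "\<exists>k. \<forall>t\<in>J. x t / ((x t)\<^sup>2 + (y t)\<^sup>2) = k"
  proof (rule has_field_derivative_zero_constant)
    show "convex J" using J by (simp add: is_interval_convex)
    fix t assume "t \<in> J"
    then show "((\<lambda>s. x s / ((x s)\<^sup>2 + (y s)\<^sup>2)) has_field_derivative 0) (at t within J)"
      using inversion_x_has_derivative[OF dx dy nz, of t] I0 by (auto intro: has_field_derivative_at_within)
  qed
  then obtain k where k: "\<And>t. t \<in> J \<Longrightarrow> x t / ((x t)\<^sup>2 + (y t)\<^sup>2) = k" by blast
  have R: "(x t)\<^sup>2 + (y t)\<^sup>2 \<noteq> 0" if "t \<in> J" for t
    using nz[OF that] by (simp add: sum_power2_eq_zero_iff)
  have "k \<noteq> 0" using k[OF t1(1)] t1 R[OF t1(1)] by auto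
  show ?thesis
  proof
    show "1 / k \<noteq> 0" using \<open>k \<noteq> 0\<close> by simp
    fix t assume "t \<in> J"
    then show "(x t)\<^sup>2 + (y t)\<^sup>2 = 1 / k * x t" using k R \<open>k \<noteq> 0\<close> by (auto simp: field_simps)
  qed
qed

lemma arctan_ratio_has_derivative:
  assumes dx: "(x has_real_derivative u) (at t)" and dy: "(y has_real_derivative v) (at t)"
    and nx: "x t \<noteq> 0"
  shows "((\<lambda>s. arctan (y s / x s)) has_real_derivative
           (x t * v - y t * u) / ((x t)\<^sup>2 + (y t)\<^sup>2)) (at t)"
proof -
  have "((\<lambda>s. arctan (y s / x s)) has_real_derivative
      inverse (1 + (y t / x t)\<^sup>2) * ((v * x t - y t * u) / (x t * x t))) (at t)"
    by (rule DERIV_chain2[OF DERIV_arctan DERIV_divide[OF dy dx nx]])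
  also have "inverse (1 + (y t / x t)\<^sup>2) = (x t)\<^sup>2 / ((x t)\<^sup>2 + (y t)\<^sup>2)"
    using nx by (simp add: field_simps)
  also have "(x t)\<^sup>2 / ((x t)\<^sup>2 + (y t)\<^sup>2) * ((v * x t - y t * u) / (x t * x t))
      = (x t * v - y t * u) / ((x t)\<^sup>2 + (y t)\<^sup>2)"
    using nx by (simp add: power2_eq_square mult.commute)
  finally show ?thesis .
qed

lemma angular_rate_squared:
  fixes a b u v c W :: real
  assumes a: "a \<noteq> 0" and c: "a\<^sup>2 + b\<^sup>2 = c * a" and W: "W > 0"
    and I0: "first_int a b u v = 0" and energy: "u\<^sup>2 + v\<^sup>2 = W / (a\<^sup>2 + b\<^sup>2)\<^sup>2"
  shows "((a * v - b * u) / (a\<^sup>2 + b\<^sup>2) * ((cos (arctan (b / a)))\<^sup>2 / sqrt W))\<^sup>2 = 1 / c ^ 6"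
proof -
  have R: "a\<^sup>2 + b\<^sup>2 \<noteq> 0" using a by (simp add: sum_power2_eq_zero_iff)
  have "(a * v - b * u)\<^sup>2 = a\<^sup>2 * (u\<^sup>2 + v\<^sup>2) - 2 * u * first_int a b u v"
    unfolding first_int_def by (simp add: field_simps power2_eq_square)
  then have rate: "(a * v - b * u)\<^sup>2 = a\<^sup>2 * W / (a\<^sup>2 + b\<^sup>2)\<^sup>2"
    using I0 energy by simp
  have cos2: "(cos (arctan (b / a)))\<^sup>2 = a\<^sup>2 / (a\<^sup>2 + b\<^sup>2)"
    using a by (simp add: cos_arctan power_divide add_pos_nonneg field_simps)
  have "((a * v - b * u) / (a\<^sup>2 + b\<^sup>2) * ((cos (arctan (b / a)))\<^sup>2 / sqrt W))\<^sup>2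
      = (a * v - b * u)\<^sup>2 / (a\<^sup>2 + b\<^sup>2)\<^sup>2 * ((cos (arctan (b / a)))\<^sup>2)\<^sup>2 / (sqrt W)\<^sup>2"
    by (simp add: power_mult_distrib power_divide)
  also have "\<dots> = a\<^sup>2 * W / (c * a)\<^sup>2 / (c * a)\<^sup>2 * (a\<^sup>2 / (c * a))\<^sup>2 / W"
    using W by (simp add: rate cos2 c)
  also have "\<dots> = 1 / c ^ 6"
    using a c R W by (simp add: field_simps eval_nat_numeral)
  finally show ?thesis .
qed

lemma zero_energy_angular_rate:
  assumes sol: "zero_energy_solution M J x y xd yd" and t: "t \<in> J" and c: "c \<noteq> 0"
    and circle: "(x t)\<^sup>2 + (y t)\<^sup>2 = c * x t"
    and I0: "first_int (x t) (y t) (xd t) (yd t) = 0"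
    and neg: "M (tan (arctan (y t / x t)) / c) < 0"
  shows "((x t * yd t - y t * xd t) / ((x t)\<^sup>2 + (y t)\<^sup>2)
          * ((cos (arctan (y t / x t)))\<^sup>2 / sqrt (- 2 * M (tan (arctan (y t / x t)) / c))))\<^sup>2
         = 1 / c ^ 6"
proof -
  from sol t have nz: "(x t, y t) \<noteq> (0, 0)"
    and energy: "(xd t)\<^sup>2 + (yd t)\<^sup>2 + 2 * Vpot M (x t) (y t) = 0"
    unfolding zero_energy_solution_def by auto
  have R: "(x t)\<^sup>2 + (y t)\<^sup>2 \<noteq> 0" using nz by (simp add: sum_power2_eq_zero_iff)
  then have x: "x t \<noteq> 0" using circle by auto
  define W where "W = - 2 * M (y t / x t / c)"
  have yR: "y t / ((x t)\<^sup>2 + (y t)\<^sup>2) = y t / x t / c" using circle by simp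
  have "2 * Vpot M (x t) (y t) = - W / ((x t)\<^sup>2 + (y t)\<^sup>2)\<^sup>2"
    unfolding W_def Vpot_def yR by simp
  then have "(xd t)\<^sup>2 + (yd t)\<^sup>2 = W / ((x t)\<^sup>2 + (y t)\<^sup>2)\<^sup>2"
    using energy by simp
  moreover have "W > 0" using neg unfolding W_def tan_arctan by simp
  ultimately show ?thesis
    using angular_rate_squared[OF x circle _ I0] unfolding W_def tan_arctan by simp
qed

lemma continuous_on_time_integrand:
  assumes M: "\<And>z. isCont M z"
    and S: "\<And>\<phi>. \<phi> \<in> S \<Longrightarrow> cos \<phi> \<noteq> 0 \<and> M (tan \<phi> / c) < 0"
  shows "continuous_on S (\<lambda>\<phi>. (cos \<phi>)\<^sup>2 / sqrt (- 2 * M (tan \<phi> / c)))"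
proof (intro continuous_at_imp_continuous_on ballI)
  fix \<phi> assume "\<phi> \<in> S"
  then have cos: "cos \<phi> \<noteq> 0" and neg: "M (tan \<phi> / c) < 0" using S by auto
  have "isCont (\<lambda>\<phi>. tan \<phi> * inverse c) \<phi>" using cos by (intro continuous_intros)
  then have "isCont (\<lambda>\<phi>. M (tan \<phi> / c)) \<phi>" unfolding divide_inverse by (rule isCont_o2[OF _ M])
  then show "isCont (\<lambda>\<phi>. (cos \<phi>)\<^sup>2 / sqrt (- 2 * M (tan \<phi> / c))) \<phi>"
    using neg by (intro continuous_intros) auto
qed

lemma zero_energy_time_law:
  fixes M x y xd yd :: "real \<Rightarrow> real"
  assumes M: "\<And>z. isCont M z" and sol: "zero_energy_solution M J x y xd yd" and c: "c \<noteq> 0"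
    and circle: "\<And>t. t \<in> J \<Longrightarrow> (x t)\<^sup>2 + (y t)\<^sup>2 = c * x t"
    and I0: "\<And>t. t \<in> J \<Longrightarrow> first_int (x t) (y t) (xd t) (yd t) = 0"
    and KJ: "K \<subseteq> J" and K: "is_interval K"
    and neg: "\<And>s. s \<in> K \<Longrightarrow> M (tan (arctan (y s / x s)) / c) < 0"
  shows "\<exists>\<sigma>\<in>{1, -1}. \<forall>t0\<in>K. \<forall>t\<in>K. t - t0 = \<sigma> * c ^ 3 *
           (LBINT \<phi>=arctan (y t0 / x t0)..arctan (y t / x t). (cos \<phi>)\<^sup>2 / sqrt (- 2 * M (tan \<phi> / c)))"
proof -
  define \<theta> where "\<theta> s = arctan (y s / x s)" for s
  define \<theta>' where "\<theta>' s = (x s * yd s - y s * xd s) / ((x s)\<^sup>2 + (y s)\<^sup>2)" for s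
  define f where "f \<phi> = (cos \<phi>)\<^sup>2 / sqrt (- 2 * M (tan \<phi> / c))" for \<phi>
  from sol have nz: "\<And>t. t \<in> J \<Longrightarrow> (x t, y t) \<noteq> (0, 0)"
    and dx: "\<And>t. t \<in> J \<Longrightarrow> (x has_real_derivative xd t) (at t)"
    and dy: "\<And>t. t \<in> J \<Longrightarrow> (y has_real_derivative yd t) (at t)"
    and cxd: "\<And>t. t \<in> J \<Longrightarrow> isCont xd t"
    and cyd: "\<And>t. t \<in> J \<Longrightarrow> isCont yd t"
    unfolding zero_energy_solution_def by (auto intro: DERIV_isCont)
  have R: "\<And>t. t \<in> J \<Longrightarrow> (x t)\<^sup>2 + (y t)\<^sup>2 \<noteq> 0"
    using nz by (simp add: sum_power2_eq_zero_iff)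
  then have x: "\<And>t. t \<in> J \<Longrightarrow> x t \<noteq> 0" using circle by fastforce
  have d\<theta>: "(\<theta> has_real_derivative \<theta>' s) (at s)" if "s \<in> K" for s
    unfolding \<theta>_def \<theta>'_def using that KJ by (intro arctan_ratio_has_derivative dx dy x) auto
  have c\<theta>': "continuous_on K \<theta>'"
    unfolding \<theta>'_def using KJ R
    by (intro continuous_at_imp_continuous_on ballI continuous_intros cxd cyd
        DERIV_isCont[OF dx] DERIV_isCont[OF dy]) auto
  have cf: "continuous_on (\<theta> ` K) f"
    unfolding f_def using neg by (intro continuous_on_time_integrand M) (auto simp: \<theta>_def)
  have "continuous_on K \<theta>"
    using DERIV_isCont[OF d\<theta>] by (intro continuous_at_imp_continuous_on) auto
  then have "continuous_on K (\<lambda>s. \<theta>' s * f (\<theta> s))"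
    using continuous_on_mult[OF c\<theta>' continuous_on_compose[OF _ cf]] by (simp add: o_def)
  moreover have "(\<theta>' s * f (\<theta> s))\<^sup>2 = (1 / c ^ 3)\<^sup>2" if s: "s \<in> K" for s
  proof -
    have sJ: "s \<in> J" using s KJ by blast
    have "(1 / c ^ 3)\<^sup>2 = 1 / c ^ 6" by (simp add: power_divide flip: power_mult)
    then show ?thesis
      using zero_energy_angular_rate[OF sol sJ c circle[OF sJ] I0[OF sJ] neg[OF s]]
      unfolding \<theta>_def \<theta>'_def f_def by simp
  qed
  ultimately have "\<exists>\<sigma>\<in>{1, -1}. \<forall>s\<in>K. \<theta>' s * f (\<theta> s) = \<sigma> * (1 / c ^ 3)"
    by (rule continuous_on_square_eq_imp_const[OF is_interval_connected[OF K]])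
  then obtain \<sigma> where \<sigma>: "\<sigma> \<in> {1, -1}"
    and rate: "\<And>s. s \<in> K \<Longrightarrow> \<theta>' s * f (\<theta> s) = \<sigma> * (1 / c ^ 3)" by blast
  have "t - t0 = \<sigma> * c ^ 3 * (LBINT \<phi>=\<theta> t0..\<theta> t. f \<phi>)" if "t0 \<in> K" "t \<in> K" for t0 t
  proof -
    have "(LBINT \<phi>=\<theta> t0..\<theta> t. f \<phi>) = \<sigma> * (1 / c ^ 3) * (t - t0)"
      by (rule interval_integral_constant_rate[OF K that d\<theta> c\<theta>' cf rate])
    then have "\<sigma> * c ^ 3 * (LBINT \<phi>=\<theta> t0..\<theta> t. f \<phi>) = (\<sigma> * c ^ 3 * (\<sigma> * (1 / c ^ 3))) * (t - t0)"
      by (simp only: mult.assoc)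
    also have "\<dots> = t - t0" using \<sigma> c by auto
    finally show ?thesis by simp
  qed
  then show ?thesis using \<sigma> unfolding \<theta>_def f_def by blast
qed

lemma zero_first_int_orbit:
  fixes M x y xd yd :: "real \<Rightarrow> real"
  assumes M: "\<And>z. isCont M z" and J: "is_interval J" and sol: "zero_energy_solution M J x y xd yd"
    and I0: "\<And>t. t \<in> J \<Longrightarrow> first_int (x t) (y t) (xd t) (yd t) = 0"
    and t1: "t1 \<in> J" "x t1 \<noteq> 0"
  shows "\<exists>c. c \<noteq> 0 \<and> (\<forall>t\<in>J. (x t - c / 2)\<^sup>2 + (y t)\<^sup>2 = c\<^sup>2 / 4)
           \<and> (\<forall>K. K \<subseteq> J \<and> is_interval K \<and> (\<forall>s\<in>K. M (tan (arctan (y s / x s)) / c) < 0) \<longrightarrow>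
                (\<exists>\<sigma>\<in>{1, -1}. \<forall>t0\<in>K. \<forall>t\<in>K. t - t0 = \<sigma> * c ^ 3 *
                   (LBINT \<phi>=arctan (y t0 / x t0)..arctan (y t / x t).
                      (cos \<phi>)\<^sup>2 / sqrt (- 2 * M (tan \<phi> / c)))))"
proof -
  from sol have dx: "\<And>t. t \<in> J \<Longrightarrow> (x has_real_derivative xd t) (at t)"
    and dy: "\<And>t. t \<in> J \<Longrightarrow> (y has_real_derivative yd t) (at t)"
    and nz: "\<And>t. t \<in> J \<Longrightarrow> (x t, y t) \<noteq> (0, 0)"
    unfolding zero_energy_solution_def by auto
  obtain c where c: "c \<noteq> 0" and circle: "\<And>t. t \<in> J \<Longrightarrow> (x t)\<^sup>2 + (y t)\<^sup>2 = c * x t"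
    using zero_first_int_circle[OF J dx dy nz I0 t1] by blast
  show ?thesis
  proof (intro exI[of _ c] conjI ballI allI impI)
    fix t assume "t \<in> J"
    have "(x t - c / 2)\<^sup>2 + (y t)\<^sup>2 = ((x t)\<^sup>2 + (y t)\<^sup>2) - c * x t + c\<^sup>2 / 4"
      by (simp add: power2_eq_square field_simps)
    then show "(x t - c / 2)\<^sup>2 + (y t)\<^sup>2 = c\<^sup>2 / 4" using circle[OF \<open>t \<in> J\<close>] by simp
  next
    fix K assume "K \<subseteq> J \<and> is_interval K \<and> (\<forall>s\<in>K. M (tan (arctan (y s / x s)) / c) < 0)"
    then show "\<exists>\<sigma>\<in>{1, -1}. \<forall>t0\<in>K. \<forall>t\<in>K. t - t0 = \<sigma> * c ^ 3 *
                   (LBINT \<phi>=arctan (y t0 / x t0)..arctan (y t / x t).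
                      (cos \<phi>)\<^sup>2 / sqrt (- 2 * M (tan \<phi> / c)))"
      using zero_energy_time_law[OF M sol c circle I0] by blast
  qed (rule c)
qed

theorem mainTheorem7:
  fixes M :: "real \<Rightarrow> real"
  assumes "smooth_fun M"
  shows
    "(\<forall>a b. (a, b) \<noteq> (0, 0) \<longrightarrow>
        (\<exists>Va Vb. ((\<lambda>s. Vpot M s b) has_real_derivative Va) (at a)
               \<and> ((\<lambda>s. Vpot M a s) has_real_derivative Vb) (at b)
               \<and> (a\<^sup>2 - b\<^sup>2) / 2 * Va + a * b * Vb + 2 * a * Vpot M a b = 0))
   \<and> (\<forall>J x y xd yd. open J \<and> is_interval J \<and> zero_energy_solution M J x y xd yd \<longrightarrow>
        (\<forall>t\<in>J. ((\<lambda>s. first_int (x s) (y s) (xd s) (yd s)) has_real_derivative 0) (at t)))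
   \<and> (\<forall>J x y xd yd. open J \<and> is_interval J \<and> zero_energy_solution M J x y xd yd
        \<and> (\<forall>t\<in>J. first_int (x t) (y t) (xd t) (yd t) = 0)
        \<and> (\<exists>t\<in>J. x t \<noteq> 0) \<longrightarrow>
        (\<exists>c1. c1 \<noteq> 0
           \<and> (\<forall>t\<in>J. (x t - c1 / 2)\<^sup>2 + (y t)\<^sup>2 = c1\<^sup>2 / 4)
           \<and> (let \<theta> = (\<lambda>t. arctan (y t / x t)) in
              \<forall>K. K \<subseteq> J \<and> is_interval K \<and> (\<forall>s\<in>K. M (tan (\<theta> s) / c1) < 0) \<longrightarrow>
                (\<exists>\<sigma>\<in>{1, -1}. \<forall>t0\<in>K. \<forall>t\<in>K.
                   t - t0 = \<sigma> * c1 ^ 3 *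
                     interval_lebesgue_integral lborel (ereal (\<theta> t0)) (ereal (\<theta> t))
                       (\<lambda>\<phi>. (cos \<phi>)\<^sup>2 / sqrt (- 2 * M (tan \<phi> / c1)))))))"
proof -
  have "M differentiable (at z)" for z
    using assms funpow_0[of deriv M] unfolding smooth_fun_def by metis
  then have M': "\<And>z. (M has_real_derivative deriv M z) (at z)"
    by (simp add: DERIV_deriv_iff_real_differentiable)
  then have M: "\<And>z. isCont M z" by (rule DERIV_isCont)
  show ?thesis
    unfolding Let_def
    apply (intro conjI allI impI)
    subgoal by (rule Vpot_invariance[OF M'])
    subgoal using first_int_has_derivative_zero[OF M'] by blast
    subgoal using zero_first_int_orbit[OF M] by blast
    done
qed

end
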